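(* Let $0<p<1$ and let $L<U$ be integers with $U-L\ge 4$. With the notation of the context, for every integer $x\in[L,U]$ the limit $m(x)=\lim_{k\to\infty}m_k(x)$ exists (and is finite), where $m_k(x)=\mathbb{E}\tau^x_k$.
   Context: Let $\xi_1,\xi_2,\dots$ be i.i.d. random variables with values in $\{1,-1\}$, $\mathbb{P}(\xi_i=1)=p$, $\mathbb{P}(\xi_i=-1)=q:=1-p$. Define $X_k=-1$ if $\xi_k=-1$; $X_k=2$ if $\xi_k=\xi_{k-1}=1$ (for $k\ge 2$); and $X_k=1$ otherwise (in particular $X_1=1$ when $\xi_1=1$). Let $S_0=0$, $S_k=X_1+\dots+X_k$, and $S^x_k=x+S_k$. For $k\ge 0$ let $\tau^x_k=\min\{l\in\{0,\dots,k\}: S^x_l\le L \text{ or } S^x_l\ge U\}$ if this set is nonempty, and $\tau^x_k=k$ otherwise. *)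

theory Defs
  imports "HOL-Probability.Probability"
begin

text \<open>Only coordinates k \<ge> 1 are used.\<close>

definition xi_space :: "real \<Rightarrow> (nat \<Rightarrow> bool) measure" where
  "xi_space p = PiM UNIV (\<lambda>_. measure_pmf (bernoulli_pmf p))"

definition xi :: "(nat \<Rightarrow> bool) \<Rightarrow> nat \<Rightarrow> int" where
  "xi \<omega> k = (if \<omega> k then 1 else -1)"

definition Xstep :: "(nat \<Rightarrow> bool) \<Rightarrow> nat \<Rightarrow> int" where
  "Xstep \<omega> k = (if xi \<omega> k = -1 then -1
                 else if k \<ge> 2 \<and> xi \<omega> k = 1 \<and> xi \<omega> (k - 1) = 1 then 2
                 else 1)"

definition Ssum :: "(nat \<Rightarrow> bool) \<Rightarrow> nat \<Rightarrow> int" where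
  "Ssum \<omega> k = (\<Sum>j=1..k. Xstep \<omega> j)"

definition tau :: "int \<Rightarrow> int \<Rightarrow> int \<Rightarrow> nat \<Rightarrow> (nat \<Rightarrow> bool) \<Rightarrow> nat" where
  "tau L U x k \<omega> =
     (if \<exists>l\<le>k. x + Ssum \<omega> l \<le> L \<or> x + Ssum \<omega> l \<ge> U
      then (LEAST l. l \<le> k \<and> (x + Ssum \<omega> l \<le> L \<or> x + Ssum \<omega> l \<ge> U))
      else k)"

definition m_k :: "real \<Rightarrow> int \<Rightarrow> int \<Rightarrow> int \<Rightarrow> nat \<Rightarrow> real" where
  "m_k p L U x k = integral\<^sup>L (xi_space p) (\<lambda>\<omega>. real (tau L U x k \<omega>))"

end

theory Submission
  imports Defs
begin

text \<open>Put \<open>N = U - L\<close>. Since \<open>N\<close> consecutive down-steps take any point below \<open>U\<close> to a point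
  at most \<open>L\<close>, a walk still strictly inside \<open>(L, U)\<close> at time \<open>n + N\<close> makes an up-step among
  \<open>\<xi>(n+1), \<dots>, \<xi>(n+N)\<close>. That event depends only on these coordinates, so it is independent of
  the walk up to time \<open>n\<close>, and it has probability \<open>r = 1 - (1 - p)^N < 1\<close>. Hence
  \<open>P(\<tau> > n) \<le> r^\<lfloor>n/N\<rfloor>\<close>, and \<open>m\<^sub>k(x) = \<Sum>n<k. P(\<tau> > n)\<close> is the partial sum of a
  convergent series; \<open>inside_until L U x \<omega> n\<close> below is the event \<open>\<tau> > n\<close>.\<close>

lemma space_xi_space [simp]: "space (xi_space p) = UNIV"
  by (simp add: xi_space_def space_PiM PiE_UNIV_domain)

lemma prob_space_xi_space: "prob_space (xi_space p)"
  unfolding xi_space_def by (intro prob_space_PiM prob_space_measure_pmf)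

lemma indep_vars_coordinates:
  "prob_space.indep_vars (xi_space p) (\<lambda>_. measure_pmf (bernoulli_pmf p)) (\<lambda>i \<omega>. \<omega> i) UNIV"
proof -
  interpret prob_space "xi_space p" by (rule prob_space_xi_space)
  have "distr (xi_space p) (measure_pmf (bernoulli_pmf p)) (\<lambda>\<omega>. \<omega> i) = measure_pmf (bernoulli_pmf p)"
    for i
    unfolding xi_space_def by (intro distr_PiM_component prob_space_measure_pmf) auto
  then show ?thesis
    by (subst indep_vars_iff_distr_eq_PiM) (simp_all add: restrict_UNIV xi_space_def)
qed

definition determined_by :: "'i set \<Rightarrow> ('i \<Rightarrow> 'a) set \<Rightarrow> bool" where
  "determined_by A S \<longleftrightarrow> (\<forall>\<omega> \<omega>'. (\<forall>i\<in>A. \<omega> i = \<omega>' i) \<longrightarrow> \<omega> \<in> S \<longrightarrow> \<omega>' \<in> S)"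

lemma determined_by_vimage_restrict:
  assumes "determined_by A S"
  shows "(\<lambda>\<omega>. restrict \<omega> A) -` ((\<lambda>\<omega>. restrict \<omega> A) ` S) = S"
proof (intro equalityI subsetI)
  fix w assume "w \<in> (\<lambda>\<omega>. restrict \<omega> A) -` ((\<lambda>\<omega>. restrict \<omega> A) ` S)"
  then obtain v where "v \<in> S" "restrict v A = restrict w A" by auto
  then have "\<forall>i\<in>A. v i = w i" by (metis restrict_apply')
  with \<open>v \<in> S\<close> show "w \<in> S" using assms unfolding determined_by_def by blast
qed auto

lemma sets_PiM_pmf_finite:
  fixes P :: "'a::finite pmf"
  assumes "finite A" "S \<subseteq> PiE A (\<lambda>_. UNIV)"
  shows "S \<in> sets (PiM A (\<lambda>_. measure_pmf P))"
proof -
  have "finite S"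
    using finite_PiE[of A "\<lambda>_. UNIV :: 'a set"] assms finite_subset by auto
  have "PiE A (\<lambda>i. {f i}) = {f}" if "f \<in> S" for f
    using that assms(2) by (force simp: PiE_iff extensional_def fun_eq_iff)
  then have "S = (\<Union>f\<in>S. PiE A (\<lambda>i. {f i}))" by auto
  also have "\<dots> \<in> sets (PiM A (\<lambda>_. measure_pmf P))"
    using \<open>finite S\<close> assms(1) by (intro sets.finite_UN ballI sets_PiM_I_finite) auto
  finally show ?thesis .
qed

lemma restrict_image_in_sets_PiM:
  fixes P :: "'a::finite pmf"
  shows "finite A \<Longrightarrow> (\<lambda>\<omega>. restrict \<omega> A) ` S \<in> sets (PiM A (\<lambda>_. measure_pmf P))"
  by (intro sets_PiM_pmf_finite) auto

lemma sets_xi_space_if_determined_by: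
  assumes "finite A" "determined_by A S"
  shows "S \<in> sets (xi_space p)"
proof -
  have "(\<lambda>\<omega>. restrict \<omega> A) \<in> xi_space p \<rightarrow>\<^sub>M PiM A (\<lambda>_. measure_pmf (bernoulli_pmf p))"
    unfolding xi_space_def by (rule measurable_restrict_subset) auto
  from measurable_sets[OF this restrict_image_in_sets_PiM[OF assms(1)], of S]
  show ?thesis by (simp add: determined_by_vimage_restrict[OF assms(2)])
qed

lemma prob_Int_determined_by_disjoint:
  assumes "finite A" "finite B" "A \<inter> B = {}" "determined_by A E" "determined_by B F"
  shows "measure (xi_space p) (E \<inter> F) = measure (xi_space p) E * measure (xi_space p) F"
proof -
  interpret prob_space "xi_space p" by (rule prob_space_xi_space)
  let ?rA = "\<lambda>\<omega>. restrict \<omega> A" and ?rB = "\<lambda>\<omega>. restrict \<omega> B"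
  have "indep_var (PiM A (\<lambda>_. measure_pmf (bernoulli_pmf p))) ?rA
                  (PiM B (\<lambda>_. measure_pmf (bernoulli_pmf p))) ?rB"
    using indep_var_restrict[OF indep_vars_coordinates] assms(3) by auto
  from indep_varD[OF this restrict_image_in_sets_PiM[OF assms(1)] restrict_image_in_sets_PiM[OF assms(2)]]
  have "prob ((\<lambda>\<omega>. (?rA \<omega>, ?rB \<omega>)) -` (?rA ` E \<times> ?rB ` F)) = prob (?rA -` ?rA ` E) * prob (?rB -` ?rB ` F)"
    by simp
  then show ?thesis
    by (simp add: vimage_Times o_def determined_by_vimage_restrict assms(4,5))
qed

lemma prob_all_coordinates_False:
  assumes "0 \<le> p" "p \<le> 1" "finite I"
  shows "measure (xi_space p) {\<omega>. \<forall>i\<in>I. \<not> \<omega> i} = (1 - p) ^ card I"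
proof -
  interpret prob_space "xi_space p" by (rule prob_space_xi_space)
  interpret product: product_prob_space "\<lambda>_. measure_pmf (bernoulli_pmf p)" UNIV
    by (intro product_prob_spaceI prob_space_measure_pmf)
  have "emeasure (xi_space p) {\<omega>\<in>space (xi_space p). \<forall>i\<in>I. \<omega> i \<in> {False}}
      = (\<Prod>i\<in>I. emeasure (measure_pmf (bernoulli_pmf p)) {False})"
    unfolding xi_space_def by (rule product.emeasure_PiM_Collect) (use assms(3) in auto)
  also have "\<dots> = ennreal ((1 - p) ^ card I)"
    using assms by (simp add: emeasure_pmf_single ennreal_power)
  finally show ?thesis
    using assms by (simp add: emeasure_eq_measure)
qed

lemma Ssum_cong: "(\<forall>i\<le>n. \<omega> i = \<omega>' i) \<Longrightarrow> l \<le> n \<Longrightarrow> Ssum \<omega> l = Ssum \<omega>' l"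
  unfolding Ssum_def by (intro sum.cong) (auto simp: Xstep_def xi_def)

lemma Ssum_add_down_steps:
  assumes "\<forall>i\<in>{n<..n + N}. \<not> \<omega> i"
  shows "Ssum \<omega> (n + N) = Ssum \<omega> n - int N"
proof -
  have "Ssum \<omega> (n + N) = Ssum \<omega> n + (\<Sum>j\<in>{n<..n + N}. Xstep \<omega> j)"
    unfolding Ssum_def using sum.ub_add_nat[of 1 n "Xstep \<omega>" N]
    by (simp add: atLeastSucAtMost_greaterThanAtMost)
  also have "(\<Sum>j\<in>{n<..n + N}. Xstep \<omega> j) = (\<Sum>j\<in>{n<..n + N}. -1)"
    using assms by (intro sum.cong) (auto simp: Xstep_def xi_def)
  finally show ?thesis by simp
qed

definition inside_until :: "int \<Rightarrow> int \<Rightarrow> int \<Rightarrow> (nat \<Rightarrow> bool) \<Rightarrow> nat \<Rightarrow> bool" where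
  "inside_until L U x \<omega> n \<longleftrightarrow> (\<forall>l\<le>n. L < x + Ssum \<omega> l \<and> x + Ssum \<omega> l < U)"

lemma determined_by_inside_until: "determined_by {..n} {\<omega>. inside_until L U x \<omega> n}"
  unfolding determined_by_def inside_until_def
proof (intro allI impI)
  fix \<omega> \<omega>' :: "nat \<Rightarrow> bool"
  assume "\<forall>i\<in>{..n}. \<omega> i = \<omega>' i"
  then have "Ssum \<omega> l = Ssum \<omega>' l" if "l \<le> n" for l
    using that by (intro Ssum_cong[of n]) auto
  moreover assume "\<omega> \<in> {\<omega>. \<forall>l\<le>n. L < x + Ssum \<omega> l \<and> x + Ssum \<omega> l < U}"
  ultimately show "\<omega>' \<in> {\<omega>. \<forall>l\<le>n. L < x + Ssum \<omega> l \<and> x + Ssum \<omega> l < U}"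
    by simp
qed

lemma up_step_if_inside_until_add:
  assumes "inside_until L U x \<omega> (n + nat (U - L))"
  shows "\<exists>i\<in>{n<..n + nat (U - L)}. \<omega> i"
proof (rule ccontr)
  assume "\<not> ?thesis"
  then have "Ssum \<omega> (n + nat (U - L)) = Ssum \<omega> n - int (nat (U - L))"
    by (intro Ssum_add_down_steps) blast
  moreover have "x + Ssum \<omega> n < U" "L < x + Ssum \<omega> (n + nat (U - L))"
    using assms unfolding inside_until_def by auto
  ultimately show False by (auto split: if_split_asm)
qed

lemma Least_bounded_eq_Least:
  fixes P :: "nat \<Rightarrow> bool"
  assumes "\<exists>l\<le>k. P l"
  shows "(LEAST l. l \<le> k \<and> P l) = (LEAST l. P l)"
proof (rule Least_equality)
  show "(LEAST l. P l) \<le> k \<and> P (LEAST l. P l)"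
    using assms by (meson LeastI Least_le le_trans)
qed (simp add: Least_le)

lemma tau_Suc:
  "tau L U x (Suc k) \<omega> = tau L U x k \<omega> + of_bool (inside_until L U x \<omega> k)"
proof -
  define exits where "exits l \<longleftrightarrow> x + Ssum \<omega> l \<le> L \<or> U \<le> x + Ssum \<omega> l" for l
  have tau_eq: "tau L U x j \<omega> = (if \<exists>l\<le>j. exits l then LEAST l. l \<le> j \<and> exits l else j)" for j
    unfolding tau_def exits_def ..
  have inside_iff: "inside_until L U x \<omega> k \<longleftrightarrow> \<not> (\<exists>l\<le>k. exits l)"
    unfolding inside_until_def exits_def by force
  show ?thesis
  proof (cases "\<exists>l\<le>k. exits l")
    case True
    then have "\<exists>l\<le>Suc k. exits l" using le_SucI by blast
    with True show ?thesis
      by (simp add: tau_eq inside_iff Least_bounded_eq_Least)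
  next
    case False
    have "(LEAST l. l \<le> Suc k \<and> exits l) = Suc k" if "exits (Suc k)"
      by (rule Least_equality) (use False that in \<open>auto simp: le_Suc_eq\<close>)
    with False show ?thesis
      by (auto simp: tau_eq inside_iff le_Suc_eq)
  qed
qed

lemma tau_eq_sum: "tau L U x k \<omega> = (\<Sum>n<k. of_bool (inside_until L U x \<omega> n))"
  by (induction k) (simp add: tau_def, simp add: tau_Suc)

lemma m_k_eq_sum_prob:
  "m_k p L U x k = (\<Sum>n<k. measure (xi_space p) {\<omega>. inside_until L U x \<omega> n})"
proof -
  interpret prob_space "xi_space p" by (rule prob_space_xi_space)
  have events: "{\<omega>. inside_until L U x \<omega> n} \<in> events" for n
    using sets_xi_space_if_determined_by[OF _ determined_by_inside_until] by simp
  have "m_k p L U x k = integral\<^sup>L (xi_space p) (\<lambda>\<omega>. \<Sum>n<k. indicator {\<omega>. inside_until L U x \<omega> n} \<omega>)"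
    unfolding m_k_def tau_eq_sum by (simp add: indicator_def)
  also have "\<dots> = (\<Sum>n<k. integral\<^sup>L (xi_space p) (indicator {\<omega>. inside_until L U x \<omega> n}))"
    using events by (intro Bochner_Integration.integral_sum integrable_real_indicator)
      (auto simp: emeasure_eq_measure)
  finally show ?thesis
    using events by (simp add: emeasure_eq_measure)
qed

lemma prob_inside_until_add_le:
  fixes L U x :: int
  assumes "0 \<le> p" "p \<le> 1"
  defines "N \<equiv> nat (U - L)"
  shows "measure (xi_space p) {\<omega>. inside_until L U x \<omega> (n + N)}
    \<le> (1 - (1 - p) ^ N) * measure (xi_space p) {\<omega>. inside_until L U x \<omega> n}"
proof -
  interpret prob_space "xi_space p" by (rule prob_space_xi_space)
  define E where "E = {\<omega>. inside_until L U x \<omega> n}"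
  define F where "F = {\<omega>. \<exists>i\<in>{n<..n + N}. \<omega> i}"
  have "determined_by {n<..n + N} F"
    unfolding determined_by_def F_def by auto
  then have "F \<in> events"
    by (intro sets_xi_space_if_determined_by) auto
  have "E \<in> events"
    unfolding E_def by (rule sets_xi_space_if_determined_by[OF _ determined_by_inside_until]) simp
  have "prob F = 1 - (1 - p) ^ N"
  proof -
    have "space (xi_space p) - F = {\<omega>. \<forall>i\<in>{n<..n + N}. \<not> \<omega> i}"
      unfolding F_def by auto
    then show ?thesis
      using prob_compl[OF \<open>F \<in> events\<close>] prob_all_coordinates_False[OF assms(1,2)] by simp
  qed
  have "{\<omega>. inside_until L U x \<omega> (n + N)} \<subseteq> E \<inter> F"
    unfolding E_def F_def N_def using up_step_if_inside_until_add
    by (auto simp: inside_until_def)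
  then have "prob {\<omega>. inside_until L U x \<omega> (n + N)} \<le> prob (E \<inter> F)"
    using \<open>E \<in> events\<close> \<open>F \<in> events\<close> by (intro finite_measure_mono) auto
  also have "\<dots> = prob E * prob F"
    unfolding E_def
    by (rule prob_Int_determined_by_disjoint[OF _ _ _ determined_by_inside_until
          \<open>determined_by {n<..n + N} F\<close>]) auto
  finally show ?thesis
    unfolding E_def \<open>prob F = 1 - (1 - p) ^ N\<close> by (simp add: mult.commute)
qed

lemma summable_power_div:
  fixes r :: real
  assumes "0 \<le> r" "r < 1" "0 < N"
  shows "summable (\<lambda>n. r ^ (n div N))"
proof (rule summableI_nonneg_bounded)
  fix k
  have "(\<Sum>n<k. r ^ (n div N)) \<le> (\<Sum>n<k * N. r ^ (n div N))"
    using assms by (intro sum_mono2) auto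
  also have "\<dots> = (\<Sum>m<k. \<Sum>n\<in>{m * N..<m * N + N}. r ^ (n div N))"
    by (rule sum.nat_group[symmetric])
  also have "\<dots> = (\<Sum>m<k. \<Sum>n\<in>{m * N..<m * N + N}. r ^ m)"
  proof (intro sum.cong refl)
    fix m n assume "n \<in> {m * N..<m * N + N}"
    then have "n div N = m" using assms(3) by (auto intro!: div_nat_eqI simp: algebra_simps)
    then show "r ^ (n div N) = r ^ m" by simp
  qed
  also have "\<dots> = real N * (\<Sum>m<k. r ^ m)"
    by (simp add: sum_distrib_left)
  also have "\<dots> = real N * ((1 - r ^ k) / (1 - r))"
    using assms by (simp add: sum_gp_strict)
  also have "\<dots> \<le> real N * (1 / (1 - r))"
    using assms by (intro mult_left_mono divide_right_mono) auto
  finally show "(\<Sum>n<k. r ^ (n div N)) \<le> real N / (1 - r)" by simp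
qed (use assms in simp)

lemma summable_if_contracts_every_N_steps:
  fixes a :: "nat \<Rightarrow> real" and r :: real
  assumes "0 \<le> r" "r < 1" "0 < N"
    and "\<And>n. 0 \<le> a n" "\<And>n. a n \<le> 1" "\<And>n. a (n + N) \<le> r * a n"
  shows "summable a"
proof (rule summable_comparison_test')
  show "summable (\<lambda>n. r ^ (n div N))"
    using assms(1-3) by (rule summable_power_div)
  show "norm (a n) \<le> r ^ (n div N)" for n
  proof (induction n rule: less_induct)
    case (less n)
    show ?case
    proof (cases "n < N")
      case True
      then show ?thesis using assms(4,5) by simp
    next
      case False
      then obtain m where m: "n = m + N" by (metis add.commute le_add_diff_inverse not_less)
      then have "a n \<le> r * a m" using assms(6) by simp
      also have "\<dots> \<le> r * r ^ (m div N)"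
        using less[of m] m assms by (intro mult_left_mono) auto
      also have "\<dots> = r ^ (n div N)"
        using m assms(3) by simp
      finally show ?thesis using assms(4) by simp
    qed
  qed
qed

theorem theorem3p2:
  fixes p :: real and L U x :: int
  assumes "0 < p" and "p < 1" and "L < U" and "U - L \<ge> 4"
    and "L \<le> x" and "x \<le> U"
  shows "convergent (\<lambda>k. m_k p L U x k)"
proof -
  interpret prob_space "xi_space p" by (rule prob_space_xi_space)
  define N where "N = nat (U - L)"
  have "0 < N" "0 < (1 - p) ^ N"
    using assms unfolding N_def by auto
  then have "summable (\<lambda>n. prob {\<omega>. inside_until L U x \<omega> n})"
    using assms(1,2) prob_inside_until_add_le[of p L U x]
    by (intro summable_if_contracts_every_N_steps[where N = N and r = "1 - (1 - p) ^ N"])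
       (auto simp: N_def power_le_one)
  then show ?thesis
    by (simp add: m_k_eq_sum_prob summable_iff_convergent)
qed

end
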